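(* Let $\Gamma$ be a splice diagram satisfying the edge determinant condition and let $T$ be a star-full subtree of $\Gamma$ with set of leaves $L(T)$. Then: (1) the vectors $\{\rho(u):u\in L(T)\}$ are linearly independent; (2) $\Delta_T:=\mathrm{conv}\{\rho(u):u\in L(T)\}$ is a simplex of dimension $|L(T)|-1$; (3) for each node $v$ of $T$, $\rho(v)$ lies in the relative interior of $\Delta_T$.
   Context: A splice diagram is a finite tree $\Gamma$ with at least one vertex of valency $\geq3$ and no vertex of valency $2$; vertices of valency $1$ are leaves, others nodes. For each node $v$ and edge $e$ at $v$ a positive integer weight $d_{v,e}$ is given; $d_{v,u}$ is the weight at $v$ of the edge toward $u$. For distinct vertices $u,v$, $\ell_{u,v}$ is the product of all $d_{w,e}$ with $w$ a node on the geodesic $[u,v]$ and $e$ an edge at $w$ not in $[u,v]$. Edge determinant condition: $d_{u,v}d_{v,u}>\ell_{u,v}$ for every edge $[u,v]$ between nodes. With $n$ leaves, $w_\lambda$ is the standard basis vector of $\mathbb{R}^n$ of leaf $\lambda$, $w_u=\sum_\lambda\ell_{u,\lambda}w_\lambda$ for a node $u$, and $\rho(u)=w_u/|w_u|$ ($1$-norm) for each vertex $u$. A subtree $T$ of $\Gamma$ is a connected subgraph; its leaves are its vertices of valency $\le1$ in $T$ and its nodes are its other vertices. $T$ is star-full if for each node $v$ of $T$, all edges of $\Gamma$ adjacent to $v$ belong to $T$. *)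

theory Defs
  imports "HOL-Analysis.Analysis"
begin

text \<open>Graphs: vertex set = the (finite) type 'v, edges = 2-element sets.\<close>

definition simple_graph :: "'v set set \<Rightarrow> bool" where
  "simple_graph E \<longleftrightarrow> (\<forall>e\<in>E. card e = 2)"

definition is_path :: "'v set set \<Rightarrow> 'v list \<Rightarrow> bool" where
  "is_path E xs \<longleftrightarrow> xs \<noteq> [] \<and> distinct xs \<and>
     (\<forall>i. Suc i < length xs \<longrightarrow> {xs ! i, xs ! Suc i} \<in> E)"

definition path_edges :: "'v list \<Rightarrow> 'v set set" where
  "path_edges xs = {{xs ! i, xs ! Suc i} | i. Suc i < length xs}"

definition has_cycle :: "'v set set \<Rightarrow> bool" where
  "has_cycle E \<longleftrightarrow> (\<exists>xs. is_path E xs \<and> length xs \<ge> 3 \<and> {last xs, hd xs} \<in> E)"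

definition connected_on :: "'v set \<Rightarrow> 'v set set \<Rightarrow> bool" where
  "connected_on V E \<longleftrightarrow> V \<noteq> {} \<and>
     (\<forall>x\<in>V. \<forall>y\<in>V. (\<lambda>a b. {a, b} \<in> E)\<^sup>*\<^sup>* x y)"

definition is_tree :: "'v set set \<Rightarrow> bool" where
  "is_tree E \<longleftrightarrow> simple_graph E \<and> connected_on (UNIV :: 'v set) E \<and> \<not> has_cycle E"

definition valency :: "'v set set \<Rightarrow> 'v \<Rightarrow> nat" where
  "valency E v = card {u. {v, u} \<in> E}"

definition is_leaf :: "'v set set \<Rightarrow> 'v \<Rightarrow> bool" where
  "is_leaf E v \<longleftrightarrow> valency E v = 1"

definition is_node :: "'v set set \<Rightarrow> 'v \<Rightarrow> bool" where
  "is_node E v \<longleftrightarrow> \<not> is_leaf E v"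

text \<open>Splice diagram: a finite tree with a vertex of valency \<ge> 3, no vertex of
  valency 2, and positive weights d v u at each node v on the edge from v to
  its neighbour u.\<close>

definition splice_diagram :: "'v set set \<Rightarrow> ('v \<Rightarrow> 'v \<Rightarrow> nat) \<Rightarrow> bool" where
  "splice_diagram E d \<longleftrightarrow> is_tree E \<and> (\<exists>v. valency E v \<ge> 3) \<and>
     (\<forall>v. valency E v \<noteq> 2) \<and>
     (\<forall>v u. is_node E v \<and> {v, u} \<in> E \<longrightarrow> d v u > 0)"

definition geodesic :: "'v set set \<Rightarrow> 'v \<Rightarrow> 'v \<Rightarrow> 'v list" where
  "geodesic E u v = (THE xs. is_path E xs \<and> hd xs = u \<and> last xs = v)"

definition ell :: "'v set set \<Rightarrow> ('v \<Rightarrow> 'v \<Rightarrow> nat) \<Rightarrow> 'v \<Rightarrow> 'v \<Rightarrow> nat" where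
  "ell E d u v =
     (\<Prod>w\<in>{w \<in> set (geodesic E u v). is_node E w}.
        \<Prod>x\<in>{x. {w, x} \<in> E \<and> {w, x} \<notin> path_edges (geodesic E u v)}. d w x)"

definition edge_determinant_condition :: "'v set set \<Rightarrow> ('v \<Rightarrow> 'v \<Rightarrow> nat) \<Rightarrow> bool" where
  "edge_determinant_condition E d \<longleftrightarrow>
     (\<forall>u v. {u, v} \<in> E \<and> is_node E u \<and> is_node E v \<longrightarrow> d u v * d v u > ell E d u v)"

text \<open>Vectors live in real^'v; only the coordinates indexed by leaves are used
  (the standard basis vector of leaf \<lambda> is axis \<lambda> 1), so this is R^n with
  n = number of leaves, embedded linearly in R^V.\<close>

definition wvec :: "'v set set \<Rightarrow> ('v \<Rightarrow> 'v \<Rightarrow> nat) \<Rightarrow> 'v \<Rightarrow> real ^ ('v::finite)" where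
  "wvec E d u = (if is_leaf E u then axis u 1
     else (\<Sum>l\<in>{l. is_leaf E l}. real (ell E d u l) *\<^sub>R axis l 1))"

definition norm1 :: "real ^ ('v::finite) \<Rightarrow> real" where
  "norm1 x = (\<Sum>i\<in>UNIV. \<bar>x $ i\<bar>)"

definition rho :: "'v set set \<Rightarrow> ('v \<Rightarrow> 'v \<Rightarrow> nat) \<Rightarrow> 'v \<Rightarrow> real ^ ('v::finite)" where
  "rho E d u = (1 / norm1 (wvec E d u)) *\<^sub>R wvec E d u"

definition subtree :: "'v set set \<Rightarrow> 'v set \<Rightarrow> 'v set set \<Rightarrow> bool" where
  "subtree E VT ET \<longleftrightarrow> ET \<subseteq> E \<and> (\<forall>e\<in>ET. e \<subseteq> VT) \<and> connected_on VT ET"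

definition sub_leaves :: "'v set \<Rightarrow> 'v set set \<Rightarrow> 'v set" where
  "sub_leaves VT ET = {v \<in> VT. valency ET v \<le> 1}"

definition sub_nodes :: "'v set \<Rightarrow> 'v set set \<Rightarrow> 'v set" where
  "sub_nodes VT ET = VT - sub_leaves VT ET"

definition star_full :: "'v set set \<Rightarrow> 'v set \<Rightarrow> 'v set set \<Rightarrow> bool" where
  "star_full E VT ET \<longleftrightarrow> (\<forall>v\<in>sub_nodes VT ET. \<forall>e\<in>E. v \<in> e \<longrightarrow> e \<in> ET)"

end

theory Submission
  imports Defs
begin

text \<open>
  At a node \<open>v\<close> split \<open>w\<^sub>v = \<Sum>\<^sub>u S\<^sub>v\<^sub>u\<close> over the neighbours \<open>u\<close> of \<open>v\<close>, where the
  branch vector \<open>S\<^sub>v\<^sub>u\<close> keeps the leaf coordinates of \<open>w\<^sub>v\<close> whose geodesic from \<open>v\<close>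
  leaves through \<open>u\<close>. Since linking numbers are multiplicative along geodesics,
  \<open>w\<^sub>u = \<beta> S\<^sub>v\<^sub>u + \<gamma> w\<^sub>v\<close> with \<open>\<gamma> \<ge> 0\<close>; for a node \<open>u\<close> the edge determinant
  condition is exactly \<open>\<beta> > 0\<close>. Summing over \<open>u\<close> shows that \<open>\<rho>(v)\<close> is a convex
  combination with positive weights of the \<open>\<rho>(u)\<close>, so for every linear functional \<open>\<phi>\<close>
  the function \<open>\<phi> \<circ> \<rho>\<close> is harmonic at the nodes of a star-full subtree \<open>T\<close> and
  satisfies a maximum principle. Applied to a functional orthogonal to \<open>span \<rho>(L(T))\<close>
  it gives \<open>\<rho>(v) \<in> span \<rho>(L(T))\<close>; applied to the dual basis it gives positive
  barycentric coordinates. For independence, the branch vectors \<open>S\<^sub>v\<^sub>u\<close> at the node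
  \<open>v\<close> of \<open>T\<close> adjacent to a leaf \<open>u\<close> of \<open>T\<close> lie in \<open>span \<rho>(L(T))\<close> and have
  pairwise disjoint supports, so this span has dimension \<open>|L(T)|\<close>.
\<close>

section \<open>Paths in graphs\<close>

lemma is_path_singleton [simp]: "is_path E [a]"
  by (simp add: is_path_def)

lemma is_path_Cons_Cons:
  "is_path E (a # b # xs) \<longleftrightarrow> {a,b} \<in> E \<and> a \<notin> set (b # xs) \<and> is_path E (b # xs)"
proof
  assume h: "is_path E (a # b # xs)"
  have "Suc 0 < length (a#b#xs)" by simp
  then have "{(a#b#xs)!0, (a#b#xs)!Suc 0} \<in> E" using h unfolding is_path_def by blast
  then have "{a,b} \<in> E" by simp
  moreover have "is_path E (b # xs)"
    unfolding is_path_def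
  proof (intro conjI allI impI)
    show "distinct (b # xs)" using h by (simp add: is_path_def)
    fix i assume "Suc i < length (b # xs)"
    then have "Suc (Suc i) < length (a # b # xs)" by simp
    then have "{(a#b#xs) ! Suc i, (a#b#xs) ! Suc (Suc i)} \<in> E" using h unfolding is_path_def by blast
    then show "{(b # xs) ! i, (b # xs) ! Suc i} \<in> E" by simp
  qed simp
  ultimately show "{a,b} \<in> E \<and> a \<notin> set (b # xs) \<and> is_path E (b # xs)"
    using h by (simp add: is_path_def)
next
  assume h: "{a,b} \<in> E \<and> a \<notin> set (b # xs) \<and> is_path E (b # xs)"
  show "is_path E (a # b # xs)"
    unfolding is_path_def
  proof (intro conjI allI impI)
    show "distinct (a # b # xs)" using h by (simp add: is_path_def)
    fix i assume i: "Suc i < length (a # b # xs)"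
    show "{(a # b # xs) ! i, (a # b # xs) ! Suc i} \<in> E"
    proof (cases i)
      case 0 then show ?thesis using h by simp
    next
      case (Suc j)
      then have "Suc j < length (b # xs)" using i by simp
      then have "{(b#xs) ! j, (b#xs) ! Suc j} \<in> E" using h unfolding is_path_def by blast
      then show ?thesis using Suc by simp
    qed
  qed simp
qed

lemma is_path_Cons:
  "is_path E (a # xs) \<longleftrightarrow> xs = [] \<or> ({a, hd xs} \<in> E \<and> a \<notin> set xs \<and> is_path E xs)"
  by (cases xs) (auto simp: is_path_Cons_Cons)

lemma is_path_nonempty: "is_path E xs \<Longrightarrow> xs \<noteq> []"
  by (simp add: is_path_def)

lemma is_path_distinct: "is_path E xs \<Longrightarrow> distinct xs"
  by (simp add: is_path_def)

lemma is_path_append: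
  assumes "xs \<noteq> []" "ys \<noteq> []"
  shows "is_path E (xs @ ys) \<longleftrightarrow>
    is_path E xs \<and> is_path E ys \<and> set xs \<inter> set ys = {} \<and> {last xs, hd ys} \<in> E"
  using assms(1)
proof (induction xs rule: list_nonempty_induct)
  case (single x)
  then show ?case using assms(2) by (auto simp: is_path_Cons)
next
  case (cons x xs)
  then show ?case using assms(2) by (cases xs) (auto simp: is_path_Cons hd_append)
qed

lemma is_path_append_left: "is_path E (xs @ ys) \<Longrightarrow> xs \<noteq> [] \<Longrightarrow> is_path E xs"
  by (cases "ys = []") (auto simp: is_path_append)

lemma is_path_append_right: "is_path E (xs @ ys) \<Longrightarrow> ys \<noteq> [] \<Longrightarrow> is_path E ys"
  by (cases "xs = []") (auto simp: is_path_append)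

lemma is_path_rev: "is_path E (rev xs) \<longleftrightarrow> is_path E xs"
proof (induction xs)
  case Nil then show ?case by (simp add: is_path_def)
next
  case (Cons a xs)
  show ?case
  proof (cases "xs = []")
    case True then show ?thesis by simp
  next
    case False
    have "is_path E (rev xs @ [a]) \<longleftrightarrow>
        is_path E (rev xs) \<and> a \<notin> set xs \<and> {last (rev xs), a} \<in> E"
      using False by (subst is_path_append) auto
    also have "\<dots> \<longleftrightarrow> is_path E (a # xs)"
      using False Cons.IH by (auto simp: is_path_Cons last_rev insert_commute)
    finally show ?thesis by simp
  qed
qed

lemma is_path_mono: "is_path E xs \<Longrightarrow> E \<subseteq> E' \<Longrightarrow> is_path E' xs"
  unfolding is_path_def by blast

lemma has_cycleI: "is_path E xs \<Longrightarrow> length xs \<ge> 3 \<Longrightarrow> {last xs, hd xs} \<in> E \<Longrightarrow> has_cycle E"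
  unfolding has_cycle_def by blast

lemma path_edges_singleton [simp]: "path_edges [a] = {}"
  by (simp add: path_edges_def)

lemma path_edges_Cons_Cons: "path_edges (a # b # xs) = insert {a,b} (path_edges (b # xs))"
proof (rule set_eqI, rule iffI)
  fix e assume "e \<in> path_edges (a # b # xs)"
  then obtain i where i: "Suc i < length (a#b#xs)" "e = {(a#b#xs) ! i, (a#b#xs) ! Suc i}"
    by (auto simp: path_edges_def)
  show "e \<in> insert {a,b} (path_edges (b # xs))"
  proof (cases i)
    case 0 then show ?thesis using i by simp
  next
    case (Suc j)
    then have "Suc j < length (b#xs)" "e = {(b#xs) ! j, (b#xs) ! Suc j}" using i by auto
    then show ?thesis unfolding path_edges_def by blast
  qed
next
  fix e assume "e \<in> insert {a,b} (path_edges (b # xs))"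
  then show "e \<in> path_edges (a # b # xs)"
  proof
    assume "e = {a,b}"
    then show ?thesis unfolding path_edges_def by (intro CollectI exI[of _ 0]) simp
  next
    assume "e \<in> path_edges (b # xs)"
    then obtain j where "Suc j < length (b#xs)" "e = {(b#xs) ! j, (b#xs) ! Suc j}"
      by (auto simp: path_edges_def)
    then show ?thesis unfolding path_edges_def by (intro CollectI exI[of _ "Suc j"]) simp
  qed
qed

lemma path_edge_subset_set: "e \<in> path_edges xs \<Longrightarrow> e \<subseteq> set xs"
  by (auto simp: path_edges_def)

lemma rtranclp_edge_imp_path:
  assumes "(\<lambda>a b. {a, b} \<in> E)\<^sup>*\<^sup>* x y"
  shows "\<exists>xs. is_path E xs \<and> hd xs = x \<and> last xs = y"
  using assms
proof (induction rule: rtranclp_induct)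
  case base
  then show ?case by (intro exI[of _ "[x]"]) simp
next
  case (step y z)
  then obtain xs where xs: "is_path E xs" "hd xs = x" "last xs = y" by blast
  show ?case
  proof (cases "z \<in> set xs")
    case True
    then obtain ys zs where sp: "xs = ys @ z # zs" by (meson split_list)
    have "is_path E ((ys @ [z]) @ zs)" using xs sp by simp
    then have "is_path E (ys @ [z])" by (rule is_path_append_left) simp
    then show ?thesis using xs sp by (intro exI[of _ "ys @ [z]"]) (cases ys, auto)
  next
    case False
    have "is_path E (xs @ [z])" using xs False step.hyps(2) is_path_nonempty[OF xs(1)]
      by (subst is_path_append) auto
    then show ?thesis using xs is_path_nonempty[OF xs(1)] by (intro exI[of _ "xs @ [z]"]) auto
  qed
qed

lemma has_cycle_if_paths_join:
  assumes "is_path E xs" "is_path E ys" "set xs \<inter> set ys = {}"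
    and "{last xs, hd ys} \<in> E" "{last ys, hd xs} \<in> E" "length xs + length ys \<ge> 3"
  shows "has_cycle E"
proof (rule has_cycleI)
  show "is_path E (xs @ ys)" using assms is_path_nonempty by (subst is_path_append) auto
  show "{last (xs @ ys), hd (xs @ ys)} \<in> E"
    using assms is_path_nonempty[of E xs] is_path_nonempty[of E ys] by simp
qed (use assms(6) in simp)

lemma has_cycle_if_paths_diverge:
  assumes pxs: "is_path E (a # x1 # xs)" and pys: "is_path E (a # y1 # ys)"
    and "x1 \<noteq> y1" and "last (x1 # xs) = last (y1 # ys)"
  shows "has_cycle E"
proof -
  let ?xs = "a # x1 # xs"
  have "last (y1 # ys) = last ?xs" using assms(4) by simp
  then have "last (y1 # ys) \<in> set ?xs" by (metis last_in_set list.discI)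
  then have "\<exists>x\<in>set (y1 # ys). x \<in> set ?xs" by (intro bexI[of _ "last (y1 # ys)"]) auto
  then obtain P c R where spy: "y1 # ys = P @ c # R" and cx: "c \<in> set ?xs"
    and Pn: "\<forall>y\<in>set P. y \<notin> set ?xs"
    using split_list_first_prop[of "y1 # ys" "\<lambda>y. y \<in> set ?xs"] by blast
  obtain X1 X2 where spx: "?xs = X1 @ c # X2" using cx by (meson split_list)
  have "c \<in> set (y1 # ys)" unfolding spy by simp
  moreover have "a \<notin> set (y1 # ys)" using pys by (simp add: is_path_Cons_Cons)
  ultimately have "a \<noteq> c" by blast
  then obtain X1' where X1: "X1 = a # X1'" using spx by (cases X1) auto
  have "is_path E ((X1 @ [c]) @ X2)" using pxs spx by simp
  then have ptx: "is_path E (X1 @ [c])" by (rule is_path_append_left) simp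
  have ea1: "{y1, a} \<in> E" using pys by (auto simp: is_path_Cons_Cons insert_commute)
  show ?thesis
  proof (cases "P = []")
    case True
    then have cy: "c = y1" using spy by simp
    have "X1' \<noteq> []" using X1 spx cy assms(3) by auto
    have "is_path E X1" "{last X1, c} \<in> E" "c \<notin> set X1"
      using ptx X1 by (subst (asm) is_path_append; simp)+
    then show ?thesis
      using has_cycle_if_paths_join[of E X1 "[c]"] X1 \<open>X1' \<noteq> []\<close> cy ea1 by (auto simp: insert_commute Suc_le_eq)
  next
    case False
    have "is_path E (y1 # ys)" using pys by (simp add: is_path_Cons_Cons)
    then have "is_path E ((P @ [c]) @ R)" using spy by simp
    then have "is_path E (P @ [c])" by (rule is_path_append_left) simp
    then have "is_path E P" "{last P, c} \<in> E" using False by (subst (asm) is_path_append; auto)+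
    moreover have "set (X1 @ [c]) \<subseteq> set ?xs" unfolding spx by auto
    then have "set (X1 @ [c]) \<inter> set (rev P) = {}" using Pn by auto
    moreover have "hd P = y1" using spy False by (cases P) auto
    ultimately show ?thesis
      using has_cycle_if_paths_join[of E "X1 @ [c]" "rev P"] ptx X1 False ea1
      by (auto simp: is_path_rev hd_rev last_rev insert_commute Suc_le_eq)
  qed
qed

lemma distinct_hd_eq_last_imp_singleton:
  assumes "distinct ys" "ys \<noteq> []" "hd ys = last ys" shows "ys = [hd ys]"
proof (cases ys)
  case Nil then show ?thesis using assms by simp
next
  case (Cons y ys')
  show ?thesis
  proof (cases "ys' = []")
    case True then show ?thesis using Cons by simp
  next
    case False
    then have "last ys' \<in> set ys'" by simp
    then show ?thesis using assms Cons False by auto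
  qed
qed

lemma acyclic_path_unique:
  assumes "\<not> has_cycle E"
  shows "is_path E xs \<Longrightarrow> is_path E ys \<Longrightarrow> hd xs = hd ys \<Longrightarrow> last xs = last ys \<Longrightarrow> xs = ys"
proof (induction xs arbitrary: ys rule: induct_list012)
  case 1 then show ?case by (simp add: is_path_def)
next
  case (2 a)
  then have "ys = [hd ys]"
    using distinct_hd_eq_last_imp_singleton[of ys] is_path_distinct is_path_nonempty by auto
  then show ?case using 2 by (metis list.sel(1))
next
  case (3 a x1 xs')
  obtain y0 ys0 where ys0: "ys = y0 # ys0" using "3.prems"(2) is_path_nonempty by (cases ys) auto
  have "ys0 \<noteq> []"
  proof
    assume "ys0 = []"
    then have "last (x1 # xs') = a" using "3.prems"(3,4) ys0 by simp
    moreover have "last (x1 # xs') \<in> set (x1 # xs')" by (rule last_in_set) simp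
    ultimately show False using is_path_distinct[OF "3.prems"(1)] by auto
  qed
  then obtain y1 ys' where ys: "ys = a # y1 # ys'" using ys0 "3.prems"(3) by (cases ys0) auto
  have pys: "is_path E (a # y1 # ys')" using "3.prems"(2) ys by simp
  have "x1 = y1"
  proof (rule ccontr)
    assume "x1 \<noteq> y1"
    moreover have "last (x1 # xs') = last (y1 # ys')" using "3.prems"(4) ys by simp
    ultimately show False using has_cycle_if_paths_diverge[OF "3.prems"(1) pys] assms by blast
  qed
  then have "x1 # xs' = y1 # ys'"
    using "3.prems" ys by (intro "3.IH"(2)) (auto simp: is_path_Cons_Cons)
  then show ?case using ys by simp
qed

section \<open>Geodesics in trees\<close>

locale tree =
  fixes E :: "('v::finite) set set"
  assumes is_tree: "is_tree E"
begin

lemma edge_neq: "{a,b} \<in> E \<Longrightarrow> a \<noteq> b"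
proof -
  assume "{a,b} \<in> E"
  then have "card {a,b} = 2" using is_tree by (auto simp: is_tree_def simple_graph_def)
  then show "a \<noteq> b" by auto
qed

lemma acyclic: "\<not> has_cycle E"
  using is_tree by (simp add: is_tree_def)

lemma geodesic_props:
  "is_path E (geodesic E x y) \<and> hd (geodesic E x y) = x \<and> last (geodesic E x y) = y"
proof -
  have "(\<lambda>a b. {a,b} \<in> E)\<^sup>*\<^sup>* x y" using is_tree by (simp add: is_tree_def connected_on_def)
  from rtranclp_edge_imp_path[OF this]
  obtain xs where xs: "is_path E xs" "hd xs = x" "last xs = y" by blast
  have "\<exists>!xs. is_path E xs \<and> hd xs = x \<and> last xs = y"
  proof (rule ex1I[of _ xs])
    fix ys assume "is_path E ys \<and> hd ys = x \<and> last ys = y"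
    then show "ys = xs" using xs acyclic_path_unique[OF acyclic, of ys xs] by simp
  qed (use xs in simp)
  then show ?thesis unfolding geodesic_def by (rule theI')
qed

lemma is_path_geodesic: "is_path E (geodesic E x y)"
  and hd_geodesic [simp]: "hd (geodesic E x y) = x"
  and last_geodesic [simp]: "last (geodesic E x y) = y"
  using geodesic_props by auto

lemma geodesic_nonempty: "geodesic E x y \<noteq> []"
  using is_path_geodesic is_path_nonempty by blast

lemma geodesic_eqI: "is_path E xs \<Longrightarrow> hd xs = x \<Longrightarrow> last xs = y \<Longrightarrow> geodesic E x y = xs"
  using acyclic_path_unique[OF acyclic, of "geodesic E x y" xs] is_path_geodesic by simp

lemma geodesic_refl: "geodesic E x x = [x]"
  by (rule geodesic_eqI) auto

lemma geodesic_edge: "{x,y} \<in> E \<Longrightarrow> geodesic E x y = [x,y]"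
  using edge_neq[of x y] by (intro geodesic_eqI) (auto simp: is_path_Cons_Cons)

lemma geodesic_prefix:
  assumes "geodesic E x z = A @ y # B"
  shows "geodesic E x y = A @ [y]"
proof -
  have "is_path E ((A @ [y]) @ B)" using assms is_path_geodesic[of x z] by simp
  then have "is_path E (A @ [y])" by (rule is_path_append_left) simp
  moreover have "hd (A @ [y]) = x" using assms hd_geodesic[of x z] by (cases A) auto
  ultimately show ?thesis by (intro geodesic_eqI) auto
qed

definition first_step :: "'v \<Rightarrow> 'v \<Rightarrow> 'v" where
  "first_step x y = hd (tl (geodesic E x y))"

lemma geodesic_first_step:
  assumes "x \<noteq> y"
  shows "geodesic E x y = x # geodesic E (first_step x y) y"
    and "{x, first_step x y} \<in> E"
    and "x \<notin> set (geodesic E (first_step x y) y)"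
proof -
  obtain t where g: "geodesic E x y = x # t"
    using geodesic_nonempty[of x y] hd_geodesic[of x y] by (cases "geodesic E x y") auto
  have "t \<noteq> []" using g last_geodesic[of x y] assms by auto
  then have pt: "is_path E t" "{x, hd t} \<in> E" "x \<notin> set t"
    using g is_path_geodesic[of x y] by (auto simp: is_path_Cons)
  have "last t = y" using g last_geodesic[of x y] \<open>t \<noteq> []\<close> by simp
  moreover have nx: "first_step x y = hd t" using g by (simp add: first_step_def)
  ultimately have "geodesic E (first_step x y) y = t" using pt by (intro geodesic_eqI) auto
  then show "geodesic E x y = x # geodesic E (first_step x y) y" "{x, first_step x y} \<in> E"
    "x \<notin> set (geodesic E (first_step x y) y)" using g pt nx by auto
qed

lemma first_step_edge: "{v,u} \<in> E \<Longrightarrow> first_step v u = u"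
  by (simp add: first_step_def geodesic_edge)

lemma geodesic_Cons:
  assumes "{x,u} \<in> E" "x \<notin> set (geodesic E u y)"
  shows "geodesic E x y = x # geodesic E u y"
proof -
  have "is_path E (x # geodesic E u y)"
    using assms is_path_geodesic[of u y] geodesic_nonempty[of u y] by (auto simp: is_path_Cons)
  then show ?thesis using geodesic_nonempty[of u y] by (intro geodesic_eqI) auto
qed

lemma not_in_geodesic_if_not_first_step:
  assumes "{v,u} \<in> E" "v \<noteq> y" "first_step v y \<noteq> u"
  shows "u \<notin> set (geodesic E v y)"
proof
  assume "u \<in> set (geodesic E v y)"
  then obtain A B where sp: "geodesic E v y = A @ u # B" by (meson split_list)
  have g: "geodesic E v y = v # geodesic E (first_step v y) y"
    using geodesic_first_step(1)[OF assms(2)] .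
  obtain A' where A: "A = v # A'" using sp g edge_neq[OF assms(1)] by (cases A) auto
  have "A' \<noteq> []"
  proof
    assume "A' = []"
    then have "geodesic E (first_step v y) y = u # B" using sp g A by simp
    then have "first_step v y = u" using hd_geodesic by (metis list.sel(1))
    then show False using assms by simp
  qed
  have "is_path E (A @ [u])" using geodesic_prefix[OF sp] is_path_geodesic by metis
  moreover have "length (A @ [u]) \<ge> 3" using A \<open>A' \<noteq> []\<close> by (cases A') auto
  moreover have "{last (A @ [u]), hd (A @ [u])} \<in> E" using A assms(1) by (simp add: insert_commute)
  ultimately show False using has_cycleI acyclic by blast
qed

lemma geodesic_via_neighbour:
  assumes "{v,u} \<in> E" "v \<noteq> y" "first_step v y \<noteq> u"
  shows "geodesic E u y = u # geodesic E v y"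
  using geodesic_Cons[of u v y] not_in_geodesic_if_not_first_step[OF assms] assms(1)
  by (simp add: insert_commute)

lemma maximal_path_end_nbrs:
  assumes "E' \<subseteq> E" "is_path E' (xs @ [p, z])"
    and maximal: "\<forall>y. {z, y} \<in> E' \<longrightarrow> y \<in> set (xs @ [p, z])"
  shows "{u. {z, u} \<in> E'} = {p}"
proof (intro set_eqI iffI)
  fix y assume "y \<in> {u. {z, u} \<in> E'}"
  then have ey: "{z,y} \<in> E'" by simp
  have "y \<noteq> z" using ey assms(1) edge_neq by blast
  show "y \<in> {p}"
  proof (rule ccontr)
    assume "y \<notin> {p}"
    then have "y \<in> set xs" using maximal ey \<open>y \<noteq> z\<close> by auto
    then obtain A B where AB: "xs = A @ y # B" by (meson split_list)
    let ?C = "y # B @ [p, z]"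
    have "is_path E' (A @ ?C)" using assms(2) AB by simp
    then have "is_path E' ?C" by (rule is_path_append_right) simp
    then have "is_path E ?C" using assms(1) is_path_mono by blast
    moreover have "length ?C \<ge> 3" by simp
    moreover have "{last ?C, hd ?C} \<in> E" using ey assms(1) by auto
    ultimately show False using has_cycleI acyclic by blast
  qed
next
  fix y assume "y \<in> {p}"
  moreover have "is_path E' ((xs @ [p]) @ [z])" using assms(2) by simp
  then have "{p, z} \<in> E'" by (subst (asm) is_path_append) auto
  ultimately show "y \<in> {u. {z, u} \<in> E'}" by (simp add: insert_commute)
qed

lemma path_extends_to_leaf:
  assumes "E' \<subseteq> E" "is_path E' xs" "length xs \<ge> 2"
  shows "\<exists>zs. is_path E' (xs @ zs) \<and> {u. {last (xs @ zs), u} \<in> E'} = {last (butlast (xs @ zs))}"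
  using assms(2,3)
proof (induction "CARD('v) - length xs" arbitrary: xs rule: less_induct)
  case less
  show ?case
  proof (cases "\<exists>y. {last xs, y} \<in> E' \<and> y \<notin> set xs")
    case True
    then obtain y where y: "{last xs, y} \<in> E'" "y \<notin> set xs" by blast
    have p: "is_path E' (xs @ [y])" using less.prems y by (subst is_path_append) auto
    have "card (set (xs @ [y])) \<le> CARD('v)" by (rule card_mono) auto
    then have "length (xs @ [y]) \<le> CARD('v)" using is_path_distinct[OF p] distinct_card by metis
    then have "CARD('v) - length (xs @ [y]) < CARD('v) - length xs" by simp
    from less.hyps[OF this p] obtain zs where
      "is_path E' ((xs @ [y]) @ zs) \<and>
       {u. {last ((xs @ [y]) @ zs), u} \<in> E'} = {last (butlast ((xs @ [y]) @ zs))}"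
      using less.prems by auto
    then show ?thesis by (intro exI[of _ "y # zs"]) simp
  next
    case False
    obtain z p R where "rev xs = z # p # R"
      using less.prems(2) by (cases "rev xs" rule: remdups_adj.cases) auto
    then have "xs = rev (z # p # R)" by (metis rev_rev_ident)
    then have xs: "xs = rev R @ [p, z]" by simp
    have "{u. {z, u} \<in> E'} = {p}"
      using maximal_path_end_nbrs[OF assms(1), of "rev R" p z] less.prems(1) False xs by auto
    then show ?thesis using xs less.prems by (intro exI[of _ "[]"]) (simp add: butlast_append)
  qed
qed

definition branch :: "'v \<Rightarrow> 'v \<Rightarrow> 'v set" where
  "branch v u = {x. v \<notin> set (geodesic E u x)}"

lemma in_branch_self: "{u,v} \<in> E \<Longrightarrow> u \<in> branch v u"
  using edge_neq by (auto simp: branch_def geodesic_refl)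

lemma branch_closed_edge:
  assumes uv: "{u,v} \<in> E" and x: "x \<in> branch v u" and xy: "{x,y} \<in> E" and ne: "{x,y} \<noteq> {u,v}"
  shows "y \<in> branch v u"
proof -
  let ?g = "geodesic E u x"
  have vg: "v \<notin> set ?g" using x by (simp add: branch_def)
  show ?thesis
  proof (cases "y \<in> set ?g")
    case True
    then obtain A B where sp: "?g = A @ y # B" by (meson split_list)
    then show ?thesis using vg geodesic_prefix[OF sp] by (auto simp: branch_def)
  next
    case False
    have "is_path E (?g @ [y])"
      using False is_path_geodesic[of u x] geodesic_nonempty[of u x] xy
      by (subst is_path_append) auto
    then have gy: "geodesic E u y = ?g @ [y]"
      using geodesic_nonempty[of u x] by (intro geodesic_eqI) auto
    have "y \<noteq> v"
    proof
      assume "y = v"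
      then have "?g = [u]" using gy geodesic_edge[OF uv] by simp
      then have "x = u" using last_geodesic[of u x] by simp
      then show False using ne \<open>y = v\<close> by simp
    qed
    then show ?thesis using gy vg by (auto simp: branch_def)
  qed
qed

lemma branch_closed_path:
  assumes uv: "{u,v} \<in> E"
  shows "is_path E xs \<Longrightarrow> hd xs \<in> branch v u \<Longrightarrow> u \<notin> set xs \<or> v \<notin> set xs \<Longrightarrow>
    last xs \<in> branch v u"
proof (induction xs)
  case Nil then show ?case by (simp add: is_path_def)
next
  case (Cons a xs)
  show ?case
  proof (cases "xs = []")
    case True then show ?thesis using Cons by simp
  next
    case False
    have e: "{a, hd xs} \<in> E" and pxs: "is_path E xs"
      using Cons.prems False by (auto simp: is_path_Cons)
    have "{a, hd xs} \<noteq> {u,v}"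
    proof
      assume "{a, hd xs} = {u,v}"
      then have "u \<in> set (a # xs)" "v \<in> set (a # xs)" using False by (auto simp: doubleton_eq_iff)
      then show False using Cons.prems(3) by blast
    qed
    then have "hd xs \<in> branch v u" using branch_closed_edge[OF uv _ e] Cons.prems by simp
    then show ?thesis using Cons.IH pxs Cons.prems(3) False by auto
  qed
qed

end

section \<open>Linking numbers along geodesics\<close>

locale splice = tree E for E :: "('v::finite) set set" +
  fixes d :: "'v \<Rightarrow> 'v \<Rightarrow> nat"
  assumes splice_diagram: "splice_diagram E d"
begin

definition nbrs :: "'v \<Rightarrow> 'v set" where
  "nbrs v = {u. {v,u} \<in> E}"

lemma valency_eq_card_nbrs: "valency E v = card (nbrs v)"
  by (simp add: valency_def nbrs_def)

lemma is_node_iff: "is_node E v \<longleftrightarrow> \<not> is_leaf E v"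
  by (simp add: is_node_def)

lemma nbrs_leaf: "is_leaf E u \<Longrightarrow> {v,u} \<in> E \<Longrightarrow> nbrs u = {v}"
proof -
  assume l: "is_leaf E u" and e: "{v,u} \<in> E"
  have "card (nbrs u) = 1" using l by (simp add: is_leaf_def valency_eq_card_nbrs)
  moreover have "v \<in> nbrs u" using e by (simp add: nbrs_def insert_commute)
  ultimately show "nbrs u = {v}" by (metis card_1_singletonE singletonD)
qed

lemma first_step_in_nbrs: "v \<noteq> l \<Longrightarrow> first_step v l \<in> nbrs v"
  using geodesic_first_step(2)[of v l] by (simp add: nbrs_def)

lemma nbrs_node_nonempty: "is_node E u \<Longrightarrow> nbrs u \<noteq> {}"
proof -
  assume u: "is_node E u"
  obtain w where w: "valency E w \<ge> 3" using splice_diagram by (auto simp: splice_diagram_def)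
  show "nbrs u \<noteq> {}"
  proof (cases "u = w")
    case True then show ?thesis using w by (auto simp: valency_eq_card_nbrs)
  next
    case False then show ?thesis using first_step_in_nbrs[of u w] by auto
  qed
qed

lemma weight_pos: "is_node E w \<Longrightarrow> {w,x} \<in> E \<Longrightarrow> d w x > 0"
  using splice_diagram by (auto simp: splice_diagram_def)

text \<open>\<open>co_weight v u\<close> is the contribution of the node \<open>v\<close> to \<open>\<ell>\<close> along a geodesic that
  passes through \<open>v\<close> and leaves it via \<open>u\<close> (an end of the geodesic).\<close>

definition co_weight :: "'v \<Rightarrow> 'v \<Rightarrow> nat" where
  "co_weight v u = (\<Prod>x\<in>nbrs v - {u}. d v x)"

lemma co_weight_pos: "is_node E v \<Longrightarrow> co_weight v u > 0"
  unfolding co_weight_def using weight_pos by (auto simp: nbrs_def intro!: prod_pos)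

lemma prod_weights_eq: "u \<in> nbrs v \<Longrightarrow> (\<Prod>x\<in>nbrs v. d v x) = d v u * co_weight v u"
  unfolding co_weight_def by (rule prod.remove) simp_all

definition ell_path :: "'v list \<Rightarrow> nat" where
  "ell_path xs = (\<Prod>w\<in>{w \<in> set xs. is_node E w}.
        \<Prod>x\<in>{x. {w, x} \<in> E \<and> {w, x} \<notin> path_edges xs}. d w x)"

lemma ell_eq_ell_path: "ell E d u v = ell_path (geodesic E u v)"
  by (simp add: ell_def ell_path_def)

lemma ell_path_singleton:
  "ell_path [a] = (if is_node E a then (\<Prod>x\<in>nbrs a. d a x) else 1)"
proof -
  have "{w \<in> set [a]. is_node E w} = (if is_node E a then {a} else {})" by auto
  then show ?thesis by (simp add: ell_path_def nbrs_def)
qed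

lemma ell_path_pos: "ell_path xs > 0"
  unfolding ell_path_def using weight_pos by (auto intro!: prod_pos)

lemma ell_path_Cons:
  assumes p: "is_path E (a # ys)" and ne: "ys \<noteq> []"
  shows "ell_path (a # ys) * (if is_node E (hd ys) then d (hd ys) a else 1)
       = (if is_node E a then co_weight a (hd ys) else 1) * ell_path ys"
proof -
  obtain b ys' where ys: "ys = b # ys'" using ne by (cases ys) auto
  have ab: "{a,b} \<in> E" and anot: "a \<notin> set ys"
    using p ys by (auto simp: is_path_Cons_Cons)
  have pe: "path_edges (a # ys) = insert {a,b} (path_edges ys)"
    using ys by (simp add: path_edges_Cons_Cons)
  define X where "X xs w = {x. {w, x} \<in> E \<and> {w, x} \<notin> path_edges xs}" for xs w
  define F where "F xs w = (\<Prod>x\<in>X xs w. d w x)" for xs w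
  define Nd where "Nd = {w \<in> set ys. is_node E w}"
  have ell_path_F: "ell_path xs = (\<Prod>w\<in>{w \<in> set xs. is_node E w}. F xs w)" for xs
    by (simp add: ell_path_def F_def X_def)
  have pa: "{a,x} \<notin> path_edges ys" for x using anot path_edge_subset_set by blast
  have Xa: "X (a # ys) a = nbrs a - {b}"
    unfolding X_def nbrs_def pe using pa by (auto simp: doubleton_eq_iff)
  have Xw: "X (a # ys) w = X ys w" if "w \<in> set ys" "w \<noteq> b" for w
    unfolding X_def pe using that anot by (auto simp: doubleton_eq_iff)
  have ainX: "a \<in> X ys b" unfolding X_def using ab pa[of b] by (auto simp: insert_commute)
  have Xb: "X (a # ys) b = X ys b - {a}"
    unfolding X_def pe by (auto simp: doubleton_eq_iff)
  have Fb: "F ys b = d b a * F (a # ys) b"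
    unfolding F_def Xb by (rule prod.remove[OF _ ainX]) simp
  have Fys: "F ys w = F (a # ys) w * (if w = b then d b a else 1)" if "w \<in> Nd" for w
    using that Fb Xw[of w] by (auto simp: F_def Nd_def)
  have "ell_path ys = (\<Prod>w\<in>Nd. F (a # ys) w) * (\<Prod>w\<in>Nd. (if w = b then d b a else 1))"
    unfolding ell_path_F Nd_def[symmetric] by (simp add: Fys prod.distrib)
  also have "(\<Prod>w\<in>Nd. (if w = b then d b a else 1)) = (if is_node E b then d b a else 1)"
    by (simp add: prod.delta Nd_def ys)
  finally have e1: "ell_path ys = (\<Prod>w\<in>Nd. F (a # ys) w) * (if is_node E b then d b a else 1)" .
  have setn: "{w \<in> set (a # ys). is_node E w} = (if is_node E a then insert a Nd else Nd)"
    by (auto simp: Nd_def)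
  have "a \<notin> Nd" using anot by (simp add: Nd_def)
  then have e2: "ell_path (a # ys) = (if is_node E a then co_weight a b else 1) * (\<Prod>w\<in>Nd. F (a # ys) w)"
    unfolding ell_path_F setn by (simp add: F_def Xa co_weight_def)
  show ?thesis using e1 e2 ys by simp
qed

lemma ell_first_step:
  assumes "v \<noteq> l"
  shows "ell E d v l * (if is_node E (first_step v l) then d (first_step v l) v else 1)
       = (if is_node E v then co_weight v (first_step v l) else 1) * ell E d (first_step v l) l"
proof -
  have g: "geodesic E v l = v # geodesic E (first_step v l) l"
    using geodesic_first_step(1)[OF assms] .
  have "is_path E (v # geodesic E (first_step v l) l)" using g is_path_geodesic by metis
  from ell_path_Cons[OF this geodesic_nonempty] show ?thesis
    unfolding hd_geodesic by (simp add: ell_eq_ell_path g)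
qed

lemma ell_via_neighbour:
  assumes "{v,u} \<in> E" "v \<noteq> l" "first_step v l \<noteq> u"
  shows "ell E d u l * (if is_node E v then d v u else 1)
       = (if is_node E u then co_weight u v else 1) * ell E d v l"
proof -
  have g: "geodesic E u l = u # geodesic E v l" using geodesic_via_neighbour[OF assms] .
  have "is_path E (u # geodesic E v l)" using g is_path_geodesic by metis
  from ell_path_Cons[OF this geodesic_nonempty] show ?thesis
    unfolding hd_geodesic by (simp add: ell_eq_ell_path g)
qed

lemma ell_adjacent_nodes:
  assumes "{u,v} \<in> E" "is_node E u" "is_node E v"
  shows "ell E d u v = co_weight u v * co_weight v u"
proof -
  have g: "geodesic E u v = [u, v]" using geodesic_edge[OF assms(1)] .
  have "is_path E [u, v]" using g is_path_geodesic by metis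
  from ell_path_Cons[OF this]
  have "ell_path [u,v] * d v u = co_weight u v * ell_path [v]" using assms by simp
  also have "ell_path [v] = (\<Prod>x\<in>nbrs v. d v x)" using assms by (simp add: ell_path_singleton)
  also have "\<dots> = d v u * co_weight v u"
    using assms by (intro prod_weights_eq) (simp add: nbrs_def insert_commute)
  finally have "ell_path [u,v] * d v u = (co_weight u v * co_weight v u) * d v u"
    by (simp only: mult_ac)
  moreover have "d v u > 0" using weight_pos assms by (simp add: insert_commute)
  ultimately show ?thesis using g by (simp add: ell_eq_ell_path)
qed

lemma ell_adjacent_leaf:
  assumes "{v,u} \<in> E" "is_leaf E u"
  shows "ell E d v u = (if is_node E v then co_weight v u else 1)"
proof -
  have g: "geodesic E v u = [v, u]" using geodesic_edge[OF assms(1)] .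
  have "is_path E [v, u]" using g is_path_geodesic by metis
  from ell_path_Cons[OF this] show ?thesis
    using assms g by (simp add: ell_eq_ell_path ell_path_singleton is_node_iff)
qed

end

section \<open>The vectors \<open>w\<close> and \<open>\<rho>\<close>\<close>

lemma sum_scaleR_axis_nth:
  "finite A \<Longrightarrow> (\<Sum>l\<in>A. c l *\<^sub>R axis l (1::real)) $ i = (if i \<in> A then c i else 0)"
  by (simp add: axis_def if_distrib sum.delta cong: if_cong)

definition coord_sum :: "real ^ ('v::finite) \<Rightarrow> real" where
  "coord_sum x = (\<Sum>i\<in>UNIV. x $ i)"

lemma linear_coord_sum: "linear coord_sum"
  unfolding coord_sum_def by (intro linearI) (simp_all add: sum.distrib sum_distrib_left)

lemma norm1_eq_coord_sum: "(\<And>i. x $ i \<ge> 0) \<Longrightarrow> norm1 x = coord_sum x"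
  by (simp add: norm1_def coord_sum_def)

context splice
begin

lemma wvec_nth:
  "wvec E d u $ i =
    (if is_leaf E u then (if i = u then 1 else 0)
     else if is_leaf E i then real (ell E d u i) else 0)"
proof (cases "is_leaf E u")
  case True then show ?thesis by (simp add: wvec_def axis_def)
next
  case False
  then have "wvec E d u $ i = (\<Sum>l\<in>{l. is_leaf E l}. real (ell E d u l) *\<^sub>R axis l 1) $ i"
    by (simp add: wvec_def)
  also have "\<dots> = (if is_leaf E i then real (ell E d u i) else 0)"
    by (subst sum_scaleR_axis_nth) simp_all
  finally show ?thesis using False by simp
qed

lemma wvec_nonneg: "wvec E d u $ i \<ge> 0"
  by (simp add: wvec_nth)

definition branch_vector :: "'v \<Rightarrow> 'v \<Rightarrow> real ^ 'v" where
  "branch_vector v u = (\<chi> i. if is_leaf E i \<and> first_step v i = u then real (ell E d v i) else 0)"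

lemma branch_vector_nth:
  "branch_vector v u $ i = (if is_leaf E i \<and> first_step v i = u then real (ell E d v i) else 0)"
  by (simp add: branch_vector_def)

lemma wvec_eq_sum_branch_vectors:
  assumes "is_node E v"
  shows "wvec E d v = (\<Sum>u\<in>nbrs v. branch_vector v u)"
unfolding vec_eq_iff proof
  fix i
  show "wvec E d v $ i = (\<Sum>u\<in>nbrs v. branch_vector v u) $ i"
  proof (cases "is_leaf E i")
    case True
    then have "v \<noteq> i" using assms by (auto simp: is_node_iff)
    then have "first_step v i \<in> nbrs v" by (rule first_step_in_nbrs)
    then show ?thesis using True assms
      by (simp add: wvec_nth branch_vector_nth is_node_iff if_distrib sum.delta cong: if_cong)
  next
    case False
    then show ?thesis using assms by (simp add: wvec_nth branch_vector_nth is_node_iff)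
  qed
qed

lemma leaf_in_branch:
  assumes v: "is_node E v" and u: "u \<in> nbrs v"
  shows "\<exists>l. is_leaf E l \<and> first_step v l = u"
proof (cases "is_leaf E u")
  case True
  then show ?thesis using first_step_edge u by (auto simp: nbrs_def)
next
  case False
  have e: "{v,u} \<in> E" using u by (simp add: nbrs_def)
  have "is_path E [v,u]" using e edge_neq[OF e] by (simp add: is_path_Cons_Cons)
  then obtain zs where zs: "is_path E ([v,u] @ zs)"
    and nb: "{x. {last ([v,u] @ zs), x} \<in> E} = {last (butlast ([v,u] @ zs))}"
    using path_extends_to_leaf[of E "[v,u]"] by auto
  let ?z = "last ([v,u] @ zs)"
  have "is_leaf E ?z" using nb by (simp add: is_leaf_def valency_def)
  moreover have "geodesic E v ?z = v # u # zs" using zs by (intro geodesic_eqI) auto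
  then have "first_step v ?z = u" by (simp add: first_step_def)
  ultimately show ?thesis by blast
qed

lemma branch_vector_pos_entry:
  assumes "is_node E v" "u \<in> nbrs v"
  shows "\<exists>i. branch_vector v u $ i > 0"
  using leaf_in_branch[OF assms] ell_path_pos by (auto simp: branch_vector_nth ell_eq_ell_path)

lemma branch_vector_leaf_nbr:
  assumes "{v,u} \<in> E" "is_leaf E u" "is_node E v" "is_leaf E i" "first_step v i = u"
  shows "i = u"
proof (rule ccontr)
  assume iu: "i \<noteq> u"
  have iv: "v \<noteq> i" using assms by (auto simp: is_node_iff)
  have vn: "v \<notin> set (geodesic E u i)" using geodesic_first_step(3)[OF iv] assms by simp
  have "first_step u i \<in> nbrs u" using first_step_in_nbrs[of u i] iu by auto
  then have "first_step u i = v" using nbrs_leaf[OF assms(2) assms(1)] by simp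
  moreover have "v \<in> set (geodesic E v i)" using hd_in_set[OF geodesic_nonempty, of v i] by simp
  ultimately have "v \<in> set (geodesic E u i)" using geodesic_first_step(1)[of u i] iu by simp
  then show False using vn by simp
qed

lemma wvec_leaf_nbr:
  assumes v: "is_node E v" and e: "{v,u} \<in> E" and u: "is_leaf E u"
  shows "wvec E d u = (1 / real (co_weight v u)) *\<^sub>R branch_vector v u"
unfolding vec_eq_iff proof
  fix i
  have "co_weight v u > 0" using co_weight_pos v by simp
  show "wvec E d u $ i = ((1 / real (co_weight v u)) *\<^sub>R branch_vector v u) $ i"
  proof (cases "is_leaf E i \<and> first_step v i = u")
    case True
    then have "i = u" using branch_vector_leaf_nbr[OF e u v] by blast
    then show ?thesis using True \<open>co_weight v u > 0\<close> ell_adjacent_leaf[OF e u] v u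
      by (simp add: wvec_nth branch_vector_nth)
  next
    case False
    then have "i \<noteq> u" using first_step_edge[OF e] u by auto
    then show ?thesis using False u by (auto simp: wvec_nth branch_vector_nth)
  qed
qed

lemma wvec_node_nbr:
  assumes v: "is_node E v" and e: "{v,u} \<in> E" and u: "is_node E u"
  shows "wvec E d u =
    (real (d u v) / real (co_weight v u) - real (co_weight u v) / real (d v u)) *\<^sub>R branch_vector v u
    + (real (co_weight u v) / real (d v u)) *\<^sub>R wvec E d v"
    (is "_ = ?\<beta> *\<^sub>R _ + ?\<gamma> *\<^sub>R _")
unfolding vec_eq_iff proof
  fix i
  have cw_pos: "co_weight v u > 0" using co_weight_pos v by simp
  have d_pos: "d v u > 0" using weight_pos v e by simp
  show "wvec E d u $ i = (?\<beta> *\<^sub>R branch_vector v u + ?\<gamma> *\<^sub>R wvec E d v) $ i"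
  proof (cases "is_leaf E i")
    case il: True
    then have iv: "v \<noteq> i" using v by (auto simp: is_node_iff)
    show ?thesis
    proof (cases "first_step v i = u")
      case True
      have "ell E d v i * d u v = co_weight v u * ell E d u i"
        using ell_first_step[OF iv] True u v by simp
      then have "real (ell E d u i) = real (ell E d v i) * real (d u v) / real (co_weight v u)"
        using cw_pos by (simp add: field_simps flip: of_nat_mult)
      then show ?thesis using il True u v
        by (simp add: wvec_nth branch_vector_nth is_node_iff field_simps)
    next
      case False
      have "ell E d u i * d v u = co_weight u v * ell E d v i"
        using ell_via_neighbour[OF e iv False] u v by simp
      then have "real (ell E d u i) = real (co_weight u v) * real (ell E d v i) / real (d v u)"
        using d_pos by (simp add: field_simps flip: of_nat_mult)
      then show ?thesis using il False u v
        by (simp add: wvec_nth branch_vector_nth is_node_iff)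
    qed
  next
    case False
    then show ?thesis using u v by (simp add: wvec_nth branch_vector_nth is_node_iff)
  qed
qed

lemma wvec_pos_entry: "\<exists>i. wvec E d u $ i > 0"
proof (cases "is_leaf E u")
  case True then show ?thesis by (intro exI[of _ u]) (simp add: wvec_nth)
next
  case False
  then have n: "is_node E u" by (simp add: is_node_iff)
  then obtain x where "x \<in> nbrs u" using nbrs_node_nonempty by blast
  then obtain l where "is_leaf E l" using leaf_in_branch[OF n] by blast
  then show ?thesis using False ell_path_pos by (intro exI[of _ l]) (simp add: wvec_nth ell_eq_ell_path)
qed

lemma norm1_wvec_pos: "norm1 (wvec E d u) > 0"
proof -
  obtain i where i: "wvec E d u $ i > 0" using wvec_pos_entry by blast
  have "\<bar>wvec E d u $ i\<bar> \<le> (\<Sum>j\<in>UNIV. \<bar>wvec E d u $ j\<bar>)"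
    by (rule member_le_sum) auto
  then show ?thesis using i unfolding norm1_def by simp
qed

lemma wvec_eq_scaleR_rho: "wvec E d u = norm1 (wvec E d u) *\<^sub>R rho E d u"
  using norm1_wvec_pos[of u] by (simp add: rho_def)

lemma coord_sum_rho: "coord_sum (rho E d u) = 1"
proof -
  have "coord_sum (rho E d u) = (1 / norm1 (wvec E d u)) * coord_sum (wvec E d u)"
    by (simp add: rho_def linear_scale[OF linear_coord_sum])
  also have "coord_sum (wvec E d u) = norm1 (wvec E d u)"
    using norm1_eq_coord_sum wvec_nonneg by metis
  finally show ?thesis using norm1_wvec_pos[of u] by simp
qed

lemma rho_nonzero: "rho E d u \<noteq> 0"
  using coord_sum_rho[of u] by (auto simp: coord_sum_def)

end

locale splice_edc = splice +
  assumes edc: "edge_determinant_condition E d"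
begin

lemma edge_determinant_co_weights:
  "{u,v} \<in> E \<Longrightarrow> is_node E u \<Longrightarrow> is_node E v \<Longrightarrow> d u v * d v u > co_weight u v * co_weight v u"
  using edc ell_adjacent_nodes by (auto simp: edge_determinant_condition_def)

lemma edge_determinant_coefficient_pos:
  assumes "is_node E v" "is_node E u" "{v,u} \<in> E"
  shows "real (d u v) / real (co_weight v u) - real (co_weight u v) / real (d v u) > 0"
proof -
  have "real (co_weight u v) * real (co_weight v u) < real (d u v) * real (d v u)"
    using edge_determinant_co_weights[of u v] assms by (simp add: insert_commute flip: of_nat_mult)
  moreover have "co_weight v u > 0" "d v u > 0" using co_weight_pos weight_pos assms by auto
  ultimately show ?thesis by (simp add: field_simps)
qed

lemma wvec_nbr_decomp:
  assumes v: "is_node E v" and u: "u \<in> nbrs v"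
  shows "\<exists>\<beta> \<gamma>. \<beta> > 0 \<and> \<gamma> \<ge> 0 \<and> wvec E d u = \<beta> *\<^sub>R branch_vector v u + \<gamma> *\<^sub>R wvec E d v"
proof (cases "is_leaf E u")
  case True
  then show ?thesis
    using wvec_leaf_nbr[OF v _ True] u co_weight_pos[OF v, of u]
    by (intro exI[of _ "1 / real (co_weight v u)"] exI[of _ 0]) (simp_all add: nbrs_def)
next
  case False
  then have "is_node E u" by (simp add: is_node_iff)
  then show ?thesis
    using wvec_node_nbr[OF v _ \<open>is_node E u\<close>] edge_determinant_coefficient_pos[OF v \<open>is_node E u\<close>] u
    by (intro exI[of _ "real (d u v) / real (co_weight v u) - real (co_weight u v) / real (d v u)"]
        exI[of _ "real (co_weight u v) / real (d v u)"]) (simp_all add: nbrs_def)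
qed

lemma branch_vector_in_span:
  assumes "is_node E v" "u \<in> nbrs v"
  shows "branch_vector v u \<in> span {rho E d u, rho E d v}"
proof -
  obtain \<beta> \<gamma> where "\<beta> > 0" "wvec E d u = \<beta> *\<^sub>R branch_vector v u + \<gamma> *\<^sub>R wvec E d v"
    using wvec_nbr_decomp[OF assms] by blast
  then have "branch_vector v u = (1 / \<beta>) *\<^sub>R (wvec E d u - \<gamma> *\<^sub>R wvec E d v)"
    by (simp add: algebra_simps)
  also have "\<dots> = (norm1 (wvec E d u) / \<beta>) *\<^sub>R rho E d u
      - (\<gamma> * norm1 (wvec E d v) / \<beta>) *\<^sub>R rho E d v"
    by (subst (1 2) wvec_eq_scaleR_rho) (simp add: algebra_simps)
  finally show ?thesis by (simp add: span_diff span_scale span_base)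
qed

lemma wvec_node_pos_combination:
  assumes v: "is_node E v"
  shows "\<exists>a. (\<forall>u\<in>nbrs v. a u > 0) \<and> wvec E d v = (\<Sum>u\<in>nbrs v. a u *\<^sub>R wvec E d u)"
proof -
  let ?w = "wvec E d"
  have "\<forall>u\<in>nbrs v. \<exists>\<beta> \<gamma>. \<beta> > 0 \<and> \<gamma> \<ge> 0 \<and> ?w u = \<beta> *\<^sub>R branch_vector v u + \<gamma> *\<^sub>R ?w v"
    using wvec_nbr_decomp[OF v] by blast
  from bchoice[OF this] obtain \<beta> where "\<forall>u\<in>nbrs v. \<exists>\<gamma>. \<beta> u > 0 \<and> \<gamma> \<ge> 0 \<and>
      ?w u = \<beta> u *\<^sub>R branch_vector v u + \<gamma> *\<^sub>R ?w v"
    by blast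
  from bchoice[OF this] obtain \<gamma> where bg: "\<forall>u\<in>nbrs v.
      \<beta> u > 0 \<and> \<gamma> u \<ge> 0 \<and> ?w u = \<beta> u *\<^sub>R branch_vector v u + \<gamma> u *\<^sub>R ?w v"
    by blast
  have \<beta>: "\<beta> u > 0" and \<gamma>: "\<gamma> u \<ge> 0"
    and S: "branch_vector v u = (1 / \<beta> u) *\<^sub>R (?w u - \<gamma> u *\<^sub>R ?w v)" if "u \<in> nbrs v" for u
    using bg that by (auto simp: algebra_simps)
  define G where "G = (\<Sum>u\<in>nbrs v. \<gamma> u / \<beta> u)"
  have G: "G \<ge> 0" unfolding G_def using \<beta> \<gamma> by (intro sum_nonneg) (simp add: less_imp_le)
  have "?w v = (\<Sum>u\<in>nbrs v. (1 / \<beta> u) *\<^sub>R (?w u - \<gamma> u *\<^sub>R ?w v))"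
    using wvec_eq_sum_branch_vectors[OF v] S by simp
  also have "\<dots> = (\<Sum>u\<in>nbrs v. (1 / \<beta> u) *\<^sub>R ?w u) - G *\<^sub>R ?w v"
    by (simp add: G_def scaleR_diff_right sum_subtractf scaleR_sum_left)
  finally have eq: "(1 + G) *\<^sub>R ?w v = (\<Sum>u\<in>nbrs v. (1 / \<beta> u) *\<^sub>R ?w u)"
    by (simp add: algebra_simps)
  have "?w v = (1 / (1 + G)) *\<^sub>R ((1 + G) *\<^sub>R ?w v)" using G by simp
  also have "\<dots> = (\<Sum>u\<in>nbrs v. (1 / ((1 + G) * \<beta> u)) *\<^sub>R ?w u)"
    unfolding eq by (simp add: scaleR_sum_right)
  finally have "?w v = (\<Sum>u\<in>nbrs v. (1 / ((1 + G) * \<beta> u)) *\<^sub>R ?w u)" .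
  moreover have "1 / ((1 + G) * \<beta> u) > 0" if "u \<in> nbrs v" for u
    using G \<beta>[OF that] by simp
  ultimately show ?thesis by (intro exI[of _ "\<lambda>u. 1 / ((1 + G) * \<beta> u)"]) blast
qed

lemma rho_node_convex_combination:
  assumes "is_node E v"
  shows "\<exists>p. (\<forall>u\<in>nbrs v. p u > 0) \<and> sum p (nbrs v) = 1 \<and>
    rho E d v = (\<Sum>u\<in>nbrs v. p u *\<^sub>R rho E d u)"
proof -
  define n where "n u = norm1 (wvec E d u)" for u
  have n: "n u > 0" for u using norm1_wvec_pos by (simp add: n_def)
  have w_n: "wvec E d u = n u *\<^sub>R rho E d u" for u
    using wvec_eq_scaleR_rho by (simp add: n_def)
  obtain a where a: "\<forall>u\<in>nbrs v. a u > 0" "wvec E d v = (\<Sum>u\<in>nbrs v. a u *\<^sub>R wvec E d u)"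
    using wvec_node_pos_combination[OF assms] by blast
  define p where "p u = a u * n u / n v" for u
  have "rho E d v = (1 / n v) *\<^sub>R wvec E d v" by (simp add: rho_def n_def)
  also have "\<dots> = (\<Sum>u\<in>nbrs v. p u *\<^sub>R rho E d u)"
    unfolding a(2) scaleR_sum_right by (intro sum.cong refl) (simp add: w_n p_def)
  finally have rv: "rho E d v = (\<Sum>u\<in>nbrs v. p u *\<^sub>R rho E d u)" .
  have "1 = coord_sum (rho E d v)" by (simp add: coord_sum_rho)
  also have "\<dots> = sum p (nbrs v)"
    by (simp add: rv linear_sum[OF linear_coord_sum] linear_scale[OF linear_coord_sum] coord_sum_rho)
  finally show ?thesis using rv a(1) n by (intro exI[of _ p]) (simp add: p_def)
qed

end

section \<open>Harmonic functions on a star-full subtree\<close>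

locale star_full_subtree = splice_edc E d for E :: "('v::finite) set set" and d +
  fixes VT :: "'v set" and ET :: "'v set set"
  assumes subtree: "subtree E VT ET" and star_full: "star_full E VT ET"
begin

abbreviation "L \<equiv> sub_leaves VT ET"
abbreviation "N \<equiv> sub_nodes VT ET"

definition nbrs_T :: "'v \<Rightarrow> 'v set" where
  "nbrs_T v = {u. {v,u} \<in> ET}"

lemma ET_subset: "ET \<subseteq> E"
  using subtree by (simp add: subtree_def)

lemma edge_T_in_VT: "{a,b} \<in> ET \<Longrightarrow> a \<in> VT \<and> b \<in> VT"
  using subtree by (auto simp: subtree_def)

lemma VT_nonempty: "VT \<noteq> {}"
  using subtree by (simp add: subtree_def connected_on_def)

lemma sub_leaves_eq: "L = {v \<in> VT. card (nbrs_T v) \<le> 1}"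
  by (simp add: sub_leaves_def valency_def nbrs_T_def)

lemma sub_nodes_eq: "N = VT - L"
  by (simp add: sub_nodes_def)

lemma sub_leaves_subset: "L \<subseteq> VT"
  by (auto simp: sub_leaves_eq)

lemma path_T: "x \<in> VT \<Longrightarrow> y \<in> VT \<Longrightarrow> \<exists>xs. is_path ET xs \<and> hd xs = x \<and> last xs = y"
  using subtree rtranclp_edge_imp_path[of ET x y] by (auto simp: subtree_def connected_on_def)

lemma is_path_T_imp_is_path: "is_path ET xs \<Longrightarrow> is_path E xs"
  using is_path_mono ET_subset by blast

lemma is_path_T_in_VT: "is_path ET xs \<Longrightarrow> hd xs \<in> VT \<Longrightarrow> set xs \<subseteq> VT"
proof (induction xs)
  case Nil then show ?case by simp
next
  case (Cons a xs)
  show ?case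
  proof (cases "xs = []")
    case True then show ?thesis using Cons by simp
  next
    case False
    then have "{a, hd xs} \<in> ET" "is_path ET xs" using Cons.prems by (auto simp: is_path_Cons)
    then show ?thesis using Cons edge_T_in_VT by auto
  qed
qed

lemma inner_vertex_is_sub_node:
  assumes p: "is_path ET (A @ x # B)" and A: "A \<noteq> []" and B: "B \<noteq> []"
  shows "x \<in> N"
proof -
  have p1: "is_path ET (x # B)" "{last A, x} \<in> ET" "set A \<inter> set (x # B) = {}"
    using p A is_path_append[of A "x # B" ET] by auto
  have e2: "{x, hd B} \<in> ET" using p1(1) B by (simp add: is_path_Cons)
  have ds: "last A \<noteq> hd B" using p1(3) A B
    by (metis IntI empty_iff hd_in_set last_in_set list.set_intros(2))
  have "{last A, hd B} \<subseteq> nbrs_T x" using p1(2) e2 by (auto simp: nbrs_T_def insert_commute)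
  then have "card {last A, hd B} \<le> card (nbrs_T x)" by (intro card_mono) auto
  then have "card (nbrs_T x) \<ge> 2" using ds by simp
  moreover have "x \<in> VT" using e2 edge_T_in_VT by blast
  ultimately show ?thesis by (auto simp: sub_nodes_eq sub_leaves_eq)
qed

lemma path_from_sub_node:
  assumes p: "is_path ET xs" and h: "hd xs \<in> N" and x: "x \<in> set xs" "x \<noteq> last xs"
  shows "x \<in> N"
proof -
  obtain A B where sp: "xs = A @ x # B" using x by (meson split_list)
  show ?thesis
  proof (cases "A = []")
    case True then show ?thesis using h sp by simp
  next
    case False
    have "B \<noteq> []" using x sp by auto
    then show ?thesis using inner_vertex_is_sub_node p sp False by blast
  qed
qed

lemma nbrs_sub_node: "v \<in> N \<Longrightarrow> nbrs v = nbrs_T v"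
  using star_full ET_subset by (auto simp: star_full_def nbrs_def nbrs_T_def)

lemma card_nbrs_T_sub_node: "v \<in> N \<Longrightarrow> card (nbrs_T v) \<ge> 2"
  by (auto simp: sub_nodes_eq sub_leaves_eq)

lemma sub_node_is_node: "v \<in> N \<Longrightarrow> is_node E v"
  using nbrs_sub_node card_nbrs_T_sub_node
  by (fastforce simp: is_node_def is_leaf_def valency_eq_card_nbrs)

lemma nbrs_T_subset: "nbrs_T v \<subseteq> VT"
  using edge_T_in_VT by (auto simp: nbrs_T_def)

lemma path_sub_node_to_sub_leaf:
  assumes v: "v \<in> N"
  shows "\<exists>xs. is_path ET xs \<and> hd xs = v \<and> last xs \<in> L"
proof -
  have "nbrs_T v \<noteq> {}" using card_nbrs_T_sub_node[OF v] by auto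
  then obtain y where y: "{v,y} \<in> ET" by (auto simp: nbrs_T_def)
  have "v \<noteq> y" using y ET_subset edge_neq by blast
  then have p: "is_path ET [v,y]" using y by (simp add: is_path_Cons_Cons)
  obtain zs where zs: "is_path ET ([v,y] @ zs)"
    and nb: "{x. {last ([v,y] @ zs), x} \<in> ET} = {last (butlast ([v,y] @ zs))}"
    using path_extends_to_leaf[OF ET_subset p] by auto
  let ?z = "last ([v,y] @ zs)"
  have "?z \<in> VT" using is_path_T_in_VT[OF zs] v by (auto simp: sub_nodes_eq)
  moreover have "card (nbrs_T ?z) = 1" using nb by (simp add: nbrs_T_def)
  ultimately have "?z \<in> L" by (simp add: sub_leaves_eq)
  then show ?thesis using zs by (intro exI[of _ "[v,y] @ zs"]) auto
qed

definition harmonic :: "('v \<Rightarrow> real) \<Rightarrow> bool" where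
  "harmonic g \<longleftrightarrow> (\<forall>x\<in>N. \<exists>p. (\<forall>u\<in>nbrs_T x. p u > 0) \<and> sum p (nbrs_T x) = 1 \<and>
     g x = (\<Sum>u\<in>nbrs_T x. p u * g u))"

lemma harmonic_uminus:
  assumes "harmonic g"
  shows "harmonic (\<lambda>x. - g x)"
  unfolding harmonic_def
proof
  fix x assume "x \<in> N"
  then obtain p where "\<forall>u\<in>nbrs_T x. p u > 0" "sum p (nbrs_T x) = 1"
    "g x = (\<Sum>u\<in>nbrs_T x. p u * g u)"
    using assms unfolding harmonic_def by blast
  then show "\<exists>p. (\<forall>u\<in>nbrs_T x. p u > 0) \<and> sum p (nbrs_T x) = 1 \<and>
      - g x = (\<Sum>u\<in>nbrs_T x. p u * - g u)"
    by (intro exI[of _ p]) (simp add: sum_negf)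
qed

lemma harmonic_linear_rho:
  assumes "linear \<phi>"
  shows "harmonic (\<lambda>x. \<phi> (rho E d x))"
  unfolding harmonic_def
proof
  fix x assume x: "x \<in> N"
  obtain p where p: "\<forall>u\<in>nbrs x. p u > 0" "sum p (nbrs x) = 1"
    "rho E d x = (\<Sum>u\<in>nbrs x. p u *\<^sub>R rho E d u)"
    using rho_node_convex_combination[OF sub_node_is_node[OF x]] by blast
  have "\<phi> (rho E d x) = (\<Sum>u\<in>nbrs x. p u * \<phi> (rho E d u))"
    using p(3) by (simp add: linear_sum[OF assms] linear_scale[OF assms])
  then show "\<exists>p. (\<forall>u\<in>nbrs_T x. p u > 0) \<and> sum p (nbrs_T x) = 1 \<and>
      \<phi> (rho E d x) = (\<Sum>u\<in>nbrs_T x. p u * \<phi> (rho E d u))"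
    using p nbrs_sub_node[OF x] by auto
qed

text \<open>A positive average of values \<open>\<le> M\<close> equals \<open>M\<close> only if all of them do.\<close>

lemma harmonic_max_at_nbr:
  assumes h: "harmonic g" and M: "\<forall>x\<in>VT. g x \<le> M" and x: "x \<in> N" "g x = M"
    and u: "u \<in> nbrs_T x"
  shows "g u = M"
proof -
  obtain p where p: "\<forall>u\<in>nbrs_T x. p u > 0" "sum p (nbrs_T x) = 1"
    "g x = (\<Sum>u\<in>nbrs_T x. p u * g u)"
    using h x unfolding harmonic_def by blast
  have "(\<Sum>u\<in>nbrs_T x. p u * (M - g u)) = M * sum p (nbrs_T x) - (\<Sum>u\<in>nbrs_T x. p u * g u)"
    by (simp add: algebra_simps sum_subtractf sum_distrib_left)
  also have "\<dots> = 0" using p x by simp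
  finally have "(\<Sum>u\<in>nbrs_T x. p u * (M - g u)) = 0" .
  moreover have "\<forall>u\<in>nbrs_T x. p u * (M - g u) \<ge> 0"
    using p(1) M nbrs_T_subset[of x] by (auto intro!: mult_nonneg_nonneg)
  ultimately have "p u * (M - g u) = 0" using u by (simp add: sum_nonneg_eq_0_iff)
  then show ?thesis using p(1) u by auto
qed

lemma harmonic_max_along_path:
  assumes h: "harmonic g" and M: "\<forall>x\<in>VT. g x \<le> M"
  shows "is_path ET xs \<Longrightarrow> hd xs \<in> N \<Longrightarrow> g (hd xs) = M \<Longrightarrow> g (last xs) = M"
proof (induction xs)
  case Nil then show ?case by (simp add: is_path_def)
next
  case (Cons a xs)
  show ?case
  proof (cases "xs = []")
    case True then show ?thesis using Cons by simp
  next
    case False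
    have e: "{a, hd xs} \<in> ET" "is_path ET xs"
      using Cons.prems False by (auto simp: is_path_Cons)
    have "g (hd xs) = M"
      using harmonic_max_at_nbr[OF h M, of a "hd xs"] Cons.prems e by (simp add: nbrs_T_def)
    moreover have "hd xs \<in> N \<or> hd xs = last xs"
      using path_from_sub_node[OF Cons.prems(1,2), of "hd xs"] False by auto
    ultimately show ?thesis using Cons.IH[OF e(2)] False by auto
  qed
qed

lemma harmonic_max_principle:
  assumes h: "harmonic g" and c: "\<forall>z\<in>L. g z \<le> c"
  shows "\<forall>x\<in>VT. g x \<le> c"
proof -
  define M where "M = Max (g ` VT)"
  have M: "\<forall>x\<in>VT. g x \<le> M" unfolding M_def by simp
  have "M \<in> g ` VT" unfolding M_def using VT_nonempty by (intro Max_in) auto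
  then obtain x0 where x0: "x0 \<in> VT" "g x0 = M" by auto
  have "M \<le> c"
  proof (cases "x0 \<in> L")
    case True then show ?thesis using c x0 by auto
  next
    case False
    then have "x0 \<in> N" using x0 by (simp add: sub_nodes_eq)
    then obtain xs where xs: "is_path ET xs" "hd xs = x0" "last xs \<in> L"
      using path_sub_node_to_sub_leaf by blast
    then have "g (last xs) = M" using harmonic_max_along_path[OF h M xs(1)] x0 \<open>x0 \<in> N\<close> by simp
    then show ?thesis using c xs by auto
  qed
  then show ?thesis using M by fastforce
qed

lemma harmonic_pos_at_sub_nodes:
  assumes h: "harmonic g" and nonneg: "\<forall>z\<in>L. g z \<ge> 0" and u: "u \<in> L" "g u > 0"
    and v: "v \<in> N"
  shows "g v > 0"
proof (rule ccontr)
  assume "\<not> g v > 0"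
  have h': "harmonic (\<lambda>x. - g x)" using harmonic_uminus[OF h] .
  have le: "\<forall>x\<in>VT. - g x \<le> 0" using harmonic_max_principle[OF h', of 0] nonneg by auto
  then have "- g v = 0" using v \<open>\<not> g v > 0\<close> by (force simp: sub_nodes_eq)
  obtain xs where xs: "is_path ET xs" "hd xs = v" "last xs = u"
    using path_T v u sub_leaves_subset by (force simp: sub_nodes_eq)
  have "- g (last xs) = 0"
    using harmonic_max_along_path[OF h' le xs(1)] xs(2) v \<open>- g v = 0\<close> by simp
  then show False using xs(3) u by simp
qed

lemma rho_sub_node_in_span:
  assumes v: "v \<in> N"
  shows "rho E d v \<in> span (rho E d ` L)"
proof -
  obtain y z where yz: "y \<in> span (rho E d ` L)" "\<And>w. w \<in> span (rho E d ` L) \<Longrightarrow> orthogonal z w"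
    "rho E d v = y + z"
    using orthogonal_subspace_decomp_exists[of "rho E d ` L" "rho E d v"] by blast
  have "linear (\<lambda>x. inner z x)" by (rule bounded_linear.linear[OF bounded_linear_inner_right])
  then have "harmonic (\<lambda>x. inner z (rho E d x))" by (rule harmonic_linear_rho)
  moreover have "\<forall>u\<in>L. inner z (rho E d u) \<le> 0"
    using yz(2) by (simp add: orthogonal_def span_base)
  ultimately have "\<forall>x\<in>VT. inner z (rho E d x) \<le> 0" by (rule harmonic_max_principle)
  moreover have "inner z (rho E d v) = inner z z"
    using yz by (simp add: inner_add_right orthogonal_def)
  ultimately have "inner z z \<le> 0" using v by (auto simp: sub_nodes_eq)
  then have "z = 0" by (metis inner_gt_zero_iff not_le)
  then show ?thesis using yz by simp
qed

end

section \<open>Criteria for linear independence\<close>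

lemma inj_on_independent_image_if_diagonal:
  fixes f :: "'a \<Rightarrow> real ^ 'n"
  assumes nz: "\<forall>u\<in>A. f u $ c u \<noteq> 0"
    and z: "\<forall>u\<in>A. \<forall>u'\<in>A. u' \<noteq> u \<longrightarrow> f u' $ c u = 0"
  shows "inj_on f A \<and> independent (f ` A)"
proof
  show "inj_on f A"
  proof (rule inj_onI)
    fix u u' assume u: "u \<in> A" "u' \<in> A" "f u = f u'"
    show "u = u'"
    proof (rule ccontr)
      assume "u \<noteq> u'"
      then have "f u' $ c u = 0" using z u by auto
      then show False using nz u by auto
    qed
  qed
  show "independent (f ` A)"
  proof
    assume "dependent (f ` A)"
    then obtain a where a: "a \<in> f ` A" "a \<in> span (f ` A - {a})" unfolding dependent_def by blast
    then obtain u where u: "u \<in> A" "a = f u" by blast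
    have "\<forall>x\<in>f ` A - {a}. x $ c u = 0" using z u by auto
    then have "a $ c u = 0"
      using linear_eq_0_on_span[OF bounded_linear.linear[OF bounded_linear_vec_nth]] a(2) by blast
    then show False using nz u by auto
  qed
qed

lemma independent_pair_if_minor_nonzero:
  fixes x y :: "real ^ 'n"
  assumes "x $ i * y $ j \<noteq> x $ j * y $ i"
  shows "x \<noteq> y \<and> independent {x, y}"
proof
  show xy: "x \<noteq> y" using assms by (auto simp: mult.commute)
  have "x \<notin> span {y}"
  proof
    assume "x \<in> span {y}"
    then obtain c where "x = c *\<^sub>R y" by (auto simp: span_singleton)
    then show False using assms by (simp add: algebra_simps)
  qed
  moreover have "y \<noteq> 0" using assms by auto
  ultimately show "independent {x, y}" using xy by (simp add: independent_insert)
qed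

lemma independent_if_card_le_independent_in_span:
  fixes A B :: "'a::euclidean_space set"
  assumes "finite A" "independent B" "B \<subseteq> span A" "card A \<le> card B"
  shows "independent A"
proof (rule card_le_dim_spanning[of A "span A"])
  have "card B \<le> dim (span A)" using independent_card_le_dim assms(2,3) by blast
  then show "card A \<le> dim (span A)" using assms(4) by simp
qed (use assms(1) in \<open>auto intro: span_base\<close>)

section \<open>Independence and positivity\<close>

context splice_edc
begin

lemma wvec_minor_nonzero_at_node:
  assumes v: "is_node E v" and u: "u \<in> nbrs v"
  shows "\<exists>i j. wvec E d v $ i * wvec E d u $ j \<noteq> wvec E d v $ j * wvec E d u $ i"
proof -
  obtain \<beta> \<gamma> where bg: "\<beta> > 0" "wvec E d u = \<beta> *\<^sub>R branch_vector v u + \<gamma> *\<^sub>R wvec E d v"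
    using wvec_nbr_decomp[OF v u] by blast
  have "card (nbrs v) \<noteq> 1" "card (nbrs v) \<noteq> 2"
    using v splice_diagram
    by (auto simp: is_node_iff is_leaf_def valency_eq_card_nbrs splice_diagram_def)
  then have "nbrs v \<noteq> {u}" by auto
  then obtain u2 where u2: "u2 \<in> nbrs v" "u2 \<noteq> u" using u by blast
  obtain i1 where i1: "branch_vector v u $ i1 > 0" using branch_vector_pos_entry[OF v u] by blast
  obtain i2 where i2: "branch_vector v u2 $ i2 > 0" using branch_vector_pos_entry[OF v u2(1)] by blast
  have l1: "is_leaf E i1" "first_step v i1 = u" using i1 by (auto simp: branch_vector_nth split: if_splits)
  have l2: "is_leaf E i2" "first_step v i2 = u2" using i2 by (auto simp: branch_vector_nth split: if_splits)
  have vl: "\<not> is_leaf E v" using v by (simp add: is_node_iff)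
  have w1: "wvec E d v $ i1 = branch_vector v u $ i1" using l1 vl by (simp add: wvec_nth branch_vector_nth)
  have w2: "wvec E d v $ i2 = branch_vector v u2 $ i2" using l2 vl by (simp add: wvec_nth branch_vector_nth)
  have s12: "branch_vector v u $ i2 = 0" using l2 u2 by (simp add: branch_vector_nth)
  let ?s1 = "branch_vector v u $ i1" and ?s2 = "branch_vector v u2 $ i2"
  have "wvec E d v $ i1 * wvec E d u $ i2 - wvec E d v $ i2 * wvec E d u $ i1 = - \<beta> * ?s1 * ?s2"
    using w1 w2 s12 by (simp add: bg(2) algebra_simps)
  moreover have "\<beta> * ?s1 * ?s2 > 0" using bg i1 i2 by simp
  ultimately show ?thesis by (intro exI[of _ i1] exI[of _ i2]) auto
qed

lemma independent_rho_edge: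
  assumes e: "{a,b} \<in> E"
  shows "rho E d a \<noteq> rho E d b \<and> independent {rho E d a, rho E d b}"
proof -
  have "\<exists>i j. wvec E d a $ i * wvec E d b $ j \<noteq> wvec E d a $ j * wvec E d b $ i"
  proof (cases "is_node E a")
    case True
    then show ?thesis using wvec_minor_nonzero_at_node[of a b] e by (simp add: nbrs_def)
  next
    case an: False
    show ?thesis
    proof (cases "is_node E b")
      case True
      then obtain i j where "wvec E d b $ i * wvec E d a $ j \<noteq> wvec E d b $ j * wvec E d a $ i"
        using wvec_minor_nonzero_at_node[of b a] e by (auto simp: nbrs_def insert_commute)
      then show ?thesis by (intro exI[of _ j] exI[of _ i]) (simp add: mult.commute)
    next
      case False
      then show ?thesis using an edge_neq[OF e]
        by (intro exI[of _ a] exI[of _ b]) (simp add: wvec_nth is_node_iff)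
    qed
  qed
  then obtain i j where ij: "wvec E d a $ i * wvec E d b $ j \<noteq> wvec E d a $ j * wvec E d b $ i"
    by blast
  have "rho E d a $ i * rho E d b $ j \<noteq> rho E d a $ j * rho E d b $ i"
  proof
    assume "rho E d a $ i * rho E d b $ j = rho E d a $ j * rho E d b $ i"
    then have "(wvec E d a $ i * wvec E d b $ j) / (norm1 (wvec E d a) * norm1 (wvec E d b))
        = (wvec E d a $ j * wvec E d b $ i) / (norm1 (wvec E d a) * norm1 (wvec E d b))"
      by (simp add: rho_def)
    then show False using ij norm1_wvec_pos[of a] norm1_wvec_pos[of b] by simp
  qed
  then show ?thesis by (rule independent_pair_if_minor_nonzero)
qed

end

context star_full_subtree
begin

definition anchor :: "'v \<Rightarrow> 'v" where
  "anchor u = (SOME v. {u,v} \<in> ET)"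

lemma anchor_of_sub_leaf:
  assumes "N \<noteq> {}" and u: "u \<in> L"
  shows "{u, anchor u} \<in> ET" "anchor u \<in> N" "nbrs_T u = {anchor u}"
proof -
  obtain v0 where v0: "v0 \<in> N" using assms(1) by blast
  have "u \<in> VT" "v0 \<in> VT" using u v0 sub_leaves_subset by (auto simp: sub_nodes_eq)
  then obtain xs where xs: "is_path ET xs" "hd xs = u" "last xs = v0" using path_T by blast
  have "u \<noteq> v0" using u v0 by (auto simp: sub_nodes_eq)
  then obtain y ys where xy: "xs = u # y # ys" using xs
    by (cases xs; cases "tl xs") (auto simp: is_path_def)
  have uy: "{u,y} \<in> ET" using xs(1) xy by (simp add: is_path_Cons_Cons)
  have "card (nbrs_T u) \<le> 1" using u by (simp add: sub_leaves_eq)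
  moreover have "y \<in> nbrs_T u" using uy by (simp add: nbrs_T_def)
  ultimately have nt: "nbrs_T u = {y}" using card_le_Suc0_iff_eq[of "nbrs_T u"] by auto
  have "{u,v} \<in> ET \<longleftrightarrow> v = y" for v using nt by (auto simp: nbrs_T_def)
  then have vy: "anchor u = y" unfolding anchor_def by simp
  show "{u, anchor u} \<in> ET" using uy vy by simp
  show "nbrs_T u = {anchor u}" using nt vy by simp
  have rp: "is_path ET (rev xs)" using xs(1) by (simp add: is_path_rev)
  have "y \<noteq> u" using uy ET_subset edge_neq by (metis insert_commute subsetD)
  moreover have "hd (rev xs) \<in> N" using xs v0 by (simp add: hd_rev)
  moreover have "last (rev xs) = u" using xs xy by (simp add: last_rev)
  ultimately show "anchor u \<in> N" using path_from_sub_node[OF rp] xy vy by auto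
qed

lemma anchor_in_geodesic:
  assumes "N \<noteq> {}" and u: "u \<in> L" and u': "u' \<in> L" and ne: "u \<noteq> u'"
  shows "anchor u \<in> set (geodesic E u u')"
proof -
  note vu = anchor_of_sub_leaf[OF assms(1) u] and vu' = anchor_of_sub_leaf[OF assms(1) u']
  have "anchor u \<in> VT" "anchor u' \<in> VT" using vu vu' by (auto simp: sub_nodes_eq)
  then obtain q where q: "is_path ET q" "hd q = anchor u" "last q = anchor u'"
    using path_T by blast
  have qN: "set q \<subseteq> N"
    using path_from_sub_node[OF q(1)] q vu(2) vu'(2) by (metis subsetI)
  have nq: "u \<notin> set q" "u' \<notin> set q" using qN u u' by (auto simp: sub_nodes_eq)
  have qne: "q \<noteq> []" using q(1) is_path_nonempty by blast
  have "is_path ET (u # q)" using q vu nq qne by (simp add: is_path_Cons)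
  then have "is_path ET ((u # q) @ [u'])"
    using q vu' nq ne qne by (subst is_path_append) (auto simp: insert_commute)
  then have "geodesic E u u' = (u # q) @ [u']"
    using is_path_T_imp_is_path by (intro geodesic_eqI) auto
  then show ?thesis using q hd_in_set[OF qne] by auto
qed

text \<open>Every geodesic from \<open>u\<close> to another leaf of \<open>T\<close> passes through \<open>anchor u\<close>, so the
  branch at \<open>anchor u\<close> through \<open>u\<close> contains no other leaf of \<open>T\<close>; being connected, two
  such branches cannot meet.\<close>

lemma anchor_branches_disjoint:
  assumes "N \<noteq> {}" and u: "u \<in> L" and u': "u' \<in> L" and ne: "u \<noteq> u'"
    and i: "is_leaf E i" and n1: "first_step (anchor u) i = u" and n2: "first_step (anchor u') i = u'"
  shows False
proof -
  have eu: "{u, anchor u} \<in> E" and eu': "{u', anchor u'} \<in> E"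
    using anchor_of_sub_leaf(1)[OF assms(1)] u u' ET_subset by auto
  have iv: "anchor u \<noteq> i" "anchor u' \<noteq> i"
    using i sub_node_is_node anchor_of_sub_leaf(2)[OF assms(1)] u u' by (auto simp: is_node_iff)
  have iS: "i \<in> branch (anchor u) u" using geodesic_first_step(3)[OF iv(1)] n1 by (simp add: branch_def)
  have iS': "i \<in> branch (anchor u') u'" using geodesic_first_step(3)[OF iv(2)] n2 by (simp add: branch_def)
  have s1: "u' \<notin> branch (anchor u) u"
    using anchor_in_geodesic[OF assms(1) u u' ne] by (simp add: branch_def)
  have s2: "u \<notin> branch (anchor u') u'"
    using anchor_in_geodesic[OF assms(1) u' u] ne by (simp add: branch_def)
  let ?p = "geodesic E u' i"
  show False
  proof (cases "u \<in> set ?p")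
    case True
    then obtain A B where sp: "?p = A @ u # B" by (meson split_list)
    have gu: "geodesic E u' u = A @ [u]" using geodesic_prefix[OF sp] .
    have "anchor u' \<notin> set (A @ [u])" using iS' sp by (auto simp: branch_def)
    moreover have "hd (A @ [u]) = u'" using gu hd_geodesic[of u' u] by simp
    ultimately have "last (A @ [u]) \<in> branch (anchor u') u'"
      using branch_closed_path[OF eu', of "A @ [u]"] is_path_geodesic[of u' u] in_branch_self[OF eu'] gu
      by simp
    then show False using s2 by simp
  next
    case False
    have "is_path E (rev ?p)" using is_path_geodesic by (simp add: is_path_rev)
    moreover have "hd (rev ?p) = i" using geodesic_nonempty by (simp add: hd_rev)
    ultimately have "last (rev ?p) \<in> branch (anchor u) u"
      using branch_closed_path[OF eu] iS False by simp
    then show False using s1 geodesic_nonempty by (simp add: last_rev)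
  qed
qed

lemma independent_anchor_branch_vectors:
  assumes "N \<noteq> {}"
  shows "inj_on (\<lambda>u. branch_vector (anchor u) u) L \<and>
    independent ((\<lambda>u. branch_vector (anchor u) u) ` L)"
proof -
  have an: "is_node E (anchor u)" "u \<in> nbrs (anchor u)" if "u \<in> L" for u
    using anchor_of_sub_leaf[OF assms that] ET_subset sub_node_is_node
    by (auto simp: nbrs_def insert_commute)
  have "\<forall>u\<in>L. \<exists>i. branch_vector (anchor u) u $ i > 0"
    using branch_vector_pos_entry an by blast
  then obtain c where c: "\<forall>u\<in>L. branch_vector (anchor u) u $ c u > 0" by metis
  have "\<forall>u\<in>L. \<forall>u'\<in>L. u' \<noteq> u \<longrightarrow> branch_vector (anchor u') u' $ c u = 0"
  proof (intro ballI impI)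
    fix u u' assume uu: "u \<in> L" "u' \<in> L" "u' \<noteq> u"
    have "is_leaf E (c u)" "first_step (anchor u) (c u) = u"
      using c uu(1) by (auto simp: branch_vector_nth split: if_splits)
    then show "branch_vector (anchor u') u' $ c u = 0"
      using anchor_branches_disjoint[OF assms uu(1,2)] uu(3) by (auto simp: branch_vector_nth)
  qed
  moreover have "\<forall>u\<in>L. branch_vector (anchor u) u $ c u \<noteq> 0" using c by auto
  ultimately show ?thesis by (intro inj_on_independent_image_if_diagonal) auto
qed

lemma anchor_branch_vector_in_span:
  assumes "N \<noteq> {}" "u \<in> L"
  shows "branch_vector (anchor u) u \<in> span (rho E d ` L)"
proof -
  have "rho E d u \<in> span (rho E d ` L)" using assms(2) by (intro span_base imageI)
  moreover have "rho E d (anchor u) \<in> span (rho E d ` L)"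
    using rho_sub_node_in_span anchor_of_sub_leaf(2)[OF assms] by blast
  ultimately have "span {rho E d u, rho E d (anchor u)} \<subseteq> span (rho E d ` L)"
    by (simp add: span_minimal)
  moreover have "branch_vector (anchor u) u \<in> span {rho E d u, rho E d (anchor u)}"
    using anchor_of_sub_leaf[OF assms] ET_subset sub_node_is_node
    by (intro branch_vector_in_span) (auto simp: nbrs_def insert_commute)
  ultimately show ?thesis by blast
qed

lemma independent_rho_sub_leaves_if_sub_node:
  assumes "N \<noteq> {}"
  shows "inj_on (rho E d) L \<and> independent (rho E d ` L)"
proof -
  let ?S = "(\<lambda>u. branch_vector (anchor u) u) ` L"
  have S: "inj_on (\<lambda>u. branch_vector (anchor u) u) L" "independent ?S"
    using independent_anchor_branch_vectors[OF assms] by auto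
  have sub: "?S \<subseteq> span (rho E d ` L)" using anchor_branch_vector_in_span[OF assms] by blast
  have "card L \<le> card (rho E d ` L)"
    using independent_span_bound[OF _ S(2) sub] card_image[OF S(1)] by simp
  then have "inj_on (rho E d) L" "card (rho E d ` L) = card ?S"
    using card_image_le[of L "rho E d"] card_image[OF S(1)] by (auto simp: inj_on_iff_eq_card)
  then show ?thesis
    using independent_if_card_le_independent_in_span[OF _ S(2) sub] by simp
qed

lemma sub_nodes_empty_edge:
  assumes "N = {}" "a \<in> VT" "b \<in> VT" "a \<noteq> b"
  shows "{a,b} \<in> ET"
proof -
  obtain xs where xs: "is_path ET xs" "hd xs = a" "last xs = b" using path_T assms(2,3) by blast
  then obtain y ys where xy: "xs = a # y # ys" using assms(4)
    by (cases xs; cases "tl xs") (auto simp: is_path_def)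
  have "ys = []"
  proof (rule ccontr)
    assume "ys \<noteq> []"
    then have "y \<in> N" using inner_vertex_is_sub_node[of "[a]" y ys] xs xy by simp
    then show False using assms(1) by simp
  qed
  then show ?thesis using xs xy by (simp add: is_path_Cons_Cons)
qed

text \<open>Without nodes, \<open>T\<close> is a single vertex or a single edge.\<close>

lemma independent_rho_sub_leaves_if_no_sub_node:
  assumes N0: "N = {}"
  shows "inj_on (rho E d) L \<and> independent (rho E d ` L)"
proof -
  have LV: "L = VT" using N0 sub_leaves_subset by (auto simp: sub_nodes_eq)
  obtain a where a: "a \<in> VT" using VT_nonempty by blast
  show ?thesis
  proof (cases "VT = {a}")
    case True
    then show ?thesis using LV rho_nonzero[of a] by (simp add: independent_insert)
  next
    case False
    then obtain b where b: "b \<in> VT" "b \<noteq> a" using a by blast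
    have ab: "{a,b} \<in> ET" using sub_nodes_empty_edge[OF N0 a b(1)] b(2) by simp
    have VT2: "VT = {a,b}"
    proof (rule ccontr)
      assume "VT \<noteq> {a,b}"
      then obtain c where c: "c \<in> VT" "c \<noteq> a" "c \<noteq> b" using a b by blast
      have ac: "{a,c} \<in> ET" using sub_nodes_empty_edge[OF N0 a c(1)] c(2) by simp
      have "{b,c} \<subseteq> nbrs_T a" using ab ac by (simp add: nbrs_T_def)
      then have "card {b,c} \<le> card (nbrs_T a)" by (intro card_mono) auto
      then have "a \<in> N" using a c by (auto simp: sub_nodes_eq sub_leaves_eq)
      then show False using N0 by simp
    qed
    have "rho E d a \<noteq> rho E d b \<and> independent {rho E d a, rho E d b}"
      using independent_rho_edge ab ET_subset by blast
    then show ?thesis using LV VT2 by (auto simp: inj_on_def)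
  qed
qed

lemma independent_rho_sub_leaves: "inj_on (rho E d) L \<and> independent (rho E d ` L)"
  using independent_rho_sub_leaves_if_sub_node independent_rho_sub_leaves_if_no_sub_node by blast

text \<open>The barycentric coordinate of \<open>\<rho>(v)\<close> at \<open>\<rho>(u\<^sub>0)\<close> is the value at \<open>v\<close> of the harmonic
  function \<open>g \<circ> \<rho>\<close>, \<open>g\<close> the dual basis functional of \<open>\<rho>(u\<^sub>0)\<close>, which is \<open>\<ge> 0\<close> on \<open>L\<close>
  and \<open>1\<close> at \<open>u\<^sub>0\<close>.\<close>

lemma rho_sub_node_barycentric_pos:
  assumes ind: "independent (rho E d ` L)" and v: "v \<in> N"
  shows "\<exists>c. (\<forall>x\<in>rho E d ` L. 0 < c x) \<and> sum c (rho E d ` L) = 1 \<and>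
    (\<Sum>x\<in>rho E d ` L. c x *\<^sub>R x) = rho E d v"
proof -
  have "finite (rho E d ` L)" by simp
  from rho_sub_node_in_span[OF v] obtain c where c: "rho E d v = (\<Sum>x\<in>rho E d ` L. c x *\<^sub>R x)"
    unfolding span_finite[OF \<open>finite (rho E d ` L)\<close>] by blast
  have pos: "c x > 0" if x: "x \<in> rho E d ` L" for x
  proof -
    obtain g :: "real ^ 'v \<Rightarrow> real"
      where g: "linear g" "\<forall>y\<in>rho E d ` L. g y = (if y = x then 1 else 0)"
      using linear_independent_extend[OF ind, of "\<lambda>y. if y = x then 1 else 0"] by blast
    have "g (rho E d v) = (\<Sum>y\<in>rho E d ` L. c y * g y)"
      using c by (simp add: linear_sum[OF g(1)] linear_scale[OF g(1)])
    also have "\<dots> = (\<Sum>y\<in>rho E d ` L. (if y = x then c y else 0))"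
      using g(2) by (intro sum.cong) auto
    also have "\<dots> = c x" using x by (simp add: sum.delta)
    finally have "g (rho E d v) = c x" .
    moreover obtain u0 where "u0 \<in> L" "x = rho E d u0" using x by blast
    then have "g (rho E d v) > 0"
      using harmonic_pos_at_sub_nodes[OF harmonic_linear_rho[OF g(1)] _ _ _ v] g(2) by auto
    ultimately show ?thesis by simp
  qed
  have "1 = coord_sum (rho E d v)" by (simp add: coord_sum_rho)
  also have "\<dots> = (\<Sum>x\<in>rho E d ` L. c x * coord_sum x)"
    by (simp add: c linear_sum[OF linear_coord_sum] linear_scale[OF linear_coord_sum])
  also have "\<dots> = sum c (rho E d ` L)" by (intro sum.cong) (auto simp: coord_sum_rho)
  finally show ?thesis using pos c by auto
qed

end

theorem proposition5p10:
  fixes E :: "('v::finite) set set" and d :: "'v \<Rightarrow> 'v \<Rightarrow> nat"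
    and VT :: "'v set" and ET :: "'v set set"
  assumes "splice_diagram E d"
    and "edge_determinant_condition E d"
    and "subtree E VT ET"
    and "star_full E VT ET"
  shows "(inj_on (rho E d) (sub_leaves VT ET)
         \<and> independent (rho E d ` sub_leaves VT ET))
         \<and> ((int (card (sub_leaves VT ET)) - 1) simplex
           (convex hull (rho E d ` sub_leaves VT ET)))
         \<and> (\<forall>v\<in>sub_nodes VT ET.
           rho E d v \<in> rel_interior (convex hull (rho E d ` sub_leaves VT ET)))"
proof -
  interpret star_full_subtree E d VT ET
    using assms by unfold_locales (auto simp: splice_diagram_def)
  have ind: "inj_on (rho E d) L" "independent (rho E d ` L)"
    using independent_rho_sub_leaves by auto
  then have aff: "\<not> affine_dependent (rho E d ` L)"
    using affine_dependent_imp_dependent by blast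
  moreover have "card (rho E d ` L) = card L" using ind(1) by (rule card_image)
  ultimately have "(int (card L) - 1) simplex (convex hull (rho E d ` L))"
    unfolding simplex_def by (intro exI[of _ "rho E d ` L"]) simp
  moreover have "\<forall>v\<in>N. rho E d v \<in> rel_interior (convex hull (rho E d ` L))"
    unfolding rel_interior_convex_hull_explicit[OF aff]
    using rho_sub_node_barycentric_pos[OF ind(2)] by simp
  ultimately show ?thesis using ind by blast
qed

end
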